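(* Let $\mathcal{S}\subseteq\mathcal{P}_{fin}(\mathbb{N})$ be an IP set, $r\geq1$, and $c:\mathcal{S}\rightarrow[1,r]$ a coloring. Then at least one of the following holds: (1) there are an IP set $\mathcal{S}'\subseteq\mathcal{S}$ and some $i\in[1,r]$ such that $c(S)\neq i$ for every $S\in\mathcal{S}'$; or (2) there are a finite collection $\mathcal{B}\subseteq\mathcal{S}$ and an IP set $\mathcal{T}\subseteq\mathcal{S}-\mathcal{B}$ such that $\mathcal{B}$ full-matches $\mathcal{T}$.
   Context: $\mathcal{P}_{fin}(\mathbb{N})$ is the set of finite subsets of $\mathbb{N}$. A set $\mathcal{S}\subseteq\mathcal{P}_{fin}(\mathbb{N})$ is an IP set if it is closed under finite unions and contains an infinite family of pairwise disjoint elements. For $B\in\mathcal{S}$, $\mathcal{S}-B:=\{T\in\mathcal{S}: T\cap B=\emptyset\}$, and for $\mathcal{B}\subseteq\mathcal{S}$, $\mathcal{S}-\mathcal{B}:=\bigcap_{B\in\mathcal{B}}(\mathcal{S}-B)$. Relative to a coloring $c$: a family $\mathcal{D}$ full-matches a set $B$ if there is $D\in\mathcal{D}$ with $c(D)=c(B)=c(D\cup B)$; $\mathcal{D}$ full-matches a family $\mathcal{B}$ if it full-matches every $B\in\mathcal{B}$. *)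

theory Defs
  imports Main
begin

definition IP_set :: "nat set set \<Rightarrow> bool" where
  "IP_set S \<longleftrightarrow>
     (\<forall>A\<in>S. finite A) \<and>
     (\<forall>A\<in>S. \<forall>B\<in>S. A \<union> B \<in> S) \<and>
     (\<exists>F. F \<subseteq> S \<and> infinite F \<and> (\<forall>A\<in>F. \<forall>B\<in>F. A \<noteq> B \<longrightarrow> A \<inter> B = {}))"

definition set_minus_fam :: "nat set set \<Rightarrow> nat set set \<Rightarrow> nat set set" where
  "set_minus_fam S \<B> = {T \<in> S. \<forall>B\<in>\<B>. T \<inter> B = {}}"

definition full_matches_set :: "(nat set \<Rightarrow> nat) \<Rightarrow> nat set set \<Rightarrow> nat set \<Rightarrow> bool" where
  "full_matches_set c \<D> B \<longleftrightarrow> (\<exists>D\<in>\<D>. c D = c B \<and> c B = c (D \<union> B))"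

definition full_matches :: "(nat set \<Rightarrow> nat) \<Rightarrow> nat set set \<Rightarrow> nat set set \<Rightarrow> bool" where
  "full_matches c \<D> \<B> \<longleftrightarrow> (\<forall>B\<in>\<B>. full_matches_set c \<D> B)"

end

theory Submission
  imports Defs "HOL-Library.Disjoint_Sets"
begin

(* Proof idea.  We prove the second alternative always holds, via the Galvin--Glazer proof of
   Hindman's theorem relativised to the IP set S.

   For an associative operation f, the
   convolution p.q = {A. {x. x^-1 A in q} in p} (with x^-1 A = {y. f x y in A}) is an associative
   operation on ultrafilters; closed sets of ultrafilters (in the Stone topology) are compact, so
   Ellis' lemma holds: every nonempty closed subsemigroup contains an idempotent p = p.p.

   For union on finite sets, the ultrafilters containing every "avoiding" family
   {x in S. x ~= {}, x disjoint from K} (K finite) form such a subsemigroup.  Its idempotent p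
   contains S, hence one colour class A.  The Galvin--Glazer construction then gives a disjoint
   sequence xs with all finite unions in A.  Finally B = {xs 0} full-matches the IP set of finite
   unions of the xs n with n > 0, which lies in S and is disjoint from xs 0. *)

definition ultrafilter :: "'a set set \<Rightarrow> bool" where
  "ultrafilter U \<longleftrightarrow> (\<forall>A B. A \<in> U \<longrightarrow> A \<subseteq> B \<longrightarrow> B \<in> U) \<and> (\<forall>A\<in>U. \<forall>B\<in>U. A \<inter> B \<in> U)
     \<and> {} \<notin> U \<and> (\<forall>A. A \<in> U \<or> -A \<in> U)"

lemma ultrafilterI:
  assumes "\<And>A B. A \<in> U \<Longrightarrow> A \<subseteq> B \<Longrightarrow> B \<in> U" "\<And>A B. A \<in> U \<Longrightarrow> B \<in> U \<Longrightarrow> A \<inter> B \<in> U"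
    "{} \<notin> U" "\<And>A. A \<in> U \<or> -A \<in> U"
  shows "ultrafilter U"
  using assms unfolding ultrafilter_def by blast

lemma ultrafilter_mono: "ultrafilter U \<Longrightarrow> A \<in> U \<Longrightarrow> A \<subseteq> B \<Longrightarrow> B \<in> U"
  unfolding ultrafilter_def by blast

lemma ultrafilter_Int: "ultrafilter U \<Longrightarrow> A \<in> U \<Longrightarrow> B \<in> U \<Longrightarrow> A \<inter> B \<in> U"
  unfolding ultrafilter_def by blast

lemma ultrafilter_empty: "ultrafilter U \<Longrightarrow> {} \<notin> U"
  unfolding ultrafilter_def by blast

lemma ultrafilter_Compl: "ultrafilter U \<Longrightarrow> -A \<in> U \<longleftrightarrow> A \<notin> U"
proof -
  assume U: "ultrafilter U"
  have "\<not> (A \<in> U \<and> -A \<in> U)"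
    using ultrafilter_Int[OF U, of A "-A"] ultrafilter_empty[OF U] by auto
  then show ?thesis using U unfolding ultrafilter_def by blast
qed

lemma ultrafilter_UNIV: "ultrafilter U \<Longrightarrow> UNIV \<in> U"
  using ultrafilter_Compl[of U "{}"] ultrafilter_empty by fastforce

lemma ultrafilter_Int_iff: "ultrafilter U \<Longrightarrow> A \<inter> B \<in> U \<longleftrightarrow> A \<in> U \<and> B \<in> U"
  by (meson inf_le1 inf_le2 ultrafilter_Int ultrafilter_mono)

lemma ultrafilter_subset_eq:
  assumes "ultrafilter U" "ultrafilter V" "U \<subseteq> V" shows "U = V"
  using assms ultrafilter_Compl by blast

lemma ultrafilter_finite_UN:
  assumes U: "ultrafilter U" and "finite I" "(\<Union>i\<in>I. A i) \<in> U" shows "\<exists>i\<in>I. A i \<in> U"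
  using assms(2,3)
proof (induction I rule: finite_induct)
  case empty then show ?case using ultrafilter_empty[OF U] by simp
next
  case (insert i I)
  show ?case
  proof (cases "A i \<in> U")
    case False
    then have "- A i \<in> U" using ultrafilter_Compl[OF U] by blast
    then have "(A i \<union> (\<Union>j\<in>I. A j)) \<inter> - A i \<in> U"
      using insert.prems ultrafilter_Int[OF U] by auto
    then have "(\<Union>j\<in>I. A j) \<in> U" using ultrafilter_mono[OF U] by blast
    then show ?thesis using insert.IH by blast
  qed blast
qed

text \<open>Ultrafilter lemma: a family closed under intersections and not containing the empty set
  extends to an ultrafilter. We take a maximal such family (Zorn) containing \<open>UNIV\<close>.\<close>
lemma ultrafilter_extend:
  assumes X_empty: "{} \<notin> X" and X_Int: "\<And>A B. A \<in> X \<Longrightarrow> B \<in> X \<Longrightarrow> A \<inter> B \<in> X"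
  shows "\<exists>U. ultrafilter U \<and> X \<subseteq> U"
proof -
  define base where "base F \<longleftrightarrow> insert UNIV X \<subseteq> F \<and> {} \<notin> F \<and> (\<forall>A\<in>F. \<forall>B\<in>F. A \<inter> B \<in> F)"
    for F :: "'a set set"
  have "\<exists>M\<in>Collect base. \<forall>F\<in>Collect base. M \<subseteq> F \<longrightarrow> F = M"
  proof (rule subset_Zorn_nonempty)
    have "insert UNIV X \<in> Collect base"
      unfolding base_def using X_empty X_Int by (auto simp: Int_absorb2)
    then show "Collect base \<noteq> {}" by blast
  next
    fix \<C> assume \<C>: "\<C> \<noteq> {}" "subset.chain (Collect base) \<C>"
    have "A \<inter> B \<in> \<Union>\<C>" if AB: "A \<in> \<Union>\<C>" "B \<in> \<Union>\<C>" for A B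
    proof -
      obtain F where "F \<in> \<C>" "{A, B} \<subseteq> F"
        by (rule finite_subset_Union_chain[of "{A, B}" \<C> "Collect base"]) (use \<C> AB in auto)
      then show ?thesis using \<C>(2) unfolding subset_chain_def base_def by blast
    qed
    moreover have "insert UNIV X \<subseteq> \<Union>\<C>" "{} \<notin> \<Union>\<C>"
      using \<C> unfolding subset_chain_def base_def by blast+
    ultimately show "\<Union>\<C> \<in> Collect base" unfolding base_def by blast
  qed
  then obtain M where M: "base M" and max: "\<And>F. base F \<Longrightarrow> M \<subseteq> F \<Longrightarrow> F = M" by blast
  have outside: "\<exists>m\<in>M. m \<inter> A = {}" if "A \<notin> M" for A
  proof -
    define F where "F = {B. \<exists>m\<in>M. m \<inter> A \<subseteq> B}"
    have "M \<subseteq> F" "A \<in> F" using M unfolding F_def base_def by auto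
    then have "\<not> base F" using max[of F] that by blast
    moreover have "\<forall>B\<in>F. \<forall>C\<in>F. B \<inter> C \<in> F"
    proof (intro ballI)
      fix B C assume "B \<in> F" "C \<in> F"
      then obtain m1 m2 where "m1 \<in> M" "m2 \<in> M" "m1 \<inter> A \<subseteq> B" "m2 \<inter> A \<subseteq> C"
        unfolding F_def by blast
      moreover have "m1 \<inter> m2 \<in> M" using M \<open>m1 \<in> M\<close> \<open>m2 \<in> M\<close> unfolding base_def by blast
      ultimately show "B \<inter> C \<in> F" unfolding F_def by blast
    qed
    ultimately have "{} \<in> F" using \<open>M \<subseteq> F\<close> M unfolding base_def by blast
    then show ?thesis unfolding F_def by blast
  qed
  have M_Int: "A \<inter> B \<in> M" if "A \<in> M" "B \<in> M" for A B
    using M that unfolding base_def by blast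
  have M_empty: "{} \<notin> M"
    using M unfolding base_def by blast
  have "ultrafilter M"
  proof (rule ultrafilterI)
    fix A B assume A: "A \<in> M" "A \<subseteq> B"
    show "B \<in> M"
    proof (rule ccontr)
      assume "B \<notin> M"
      then obtain m where "m \<in> M" "m \<inter> B = {}" using outside by blast
      then have "m \<inter> A = {}" using A by blast
      then show False using M_Int[OF \<open>m \<in> M\<close> A(1)] M_empty by simp
    qed
  next
    fix A show "A \<in> M \<or> -A \<in> M"
    proof (rule ccontr)
      assume "\<not> (A \<in> M \<or> -A \<in> M)"
      then obtain m1 m2 where "m1 \<in> M" "m1 \<inter> A = {}" "m2 \<in> M" "m2 \<inter> -A = {}"
        using outside by meson
      then have "m1 \<inter> m2 = {}" by blast
      then show False using M_Int[OF \<open>m1 \<in> M\<close> \<open>m2 \<in> M\<close>] M_empty by simp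
    qed
  qed (use M_Int M_empty in blast)+
  then show ?thesis using M unfolding base_def by blast
qed

text \<open>For an associative operation \<open>f\<close>: the shift \<open>x\<^sup>-\<^sup>1A = {y. f x y \<in> A}\<close>, the set of points whose
  shift of \<open>A\<close> is \<open>q\<close>-large, and the convolution \<open>p \<cdot> q\<close> of families of sets, which extends \<open>f\<close>
  from points (principal ultrafilters) to all ultrafilters.\<close>
definition shift :: "('a \<Rightarrow> 'a \<Rightarrow> 'a) \<Rightarrow> 'a set \<Rightarrow> 'a \<Rightarrow> 'a set" where
  "shift f A x = {y. f x y \<in> A}"

definition return_set :: "('a \<Rightarrow> 'a \<Rightarrow> 'a) \<Rightarrow> 'a set set \<Rightarrow> 'a set \<Rightarrow> 'a set" where
  "return_set f q A = {x. shift f A x \<in> q}"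

definition convol :: "('a \<Rightarrow> 'a \<Rightarrow> 'a) \<Rightarrow> 'a set set \<Rightarrow> 'a set set \<Rightarrow> 'a set set" where
  "convol f p q = {A. return_set f q A \<in> p}"

lemma convol_iff: "A \<in> convol f p q \<longleftrightarrow> return_set f q A \<in> p"
  unfolding convol_def by simp

lemma shift_Int: "shift f (A \<inter> B) x = shift f A x \<inter> shift f B x"
  unfolding shift_def by auto

lemma shift_Compl: "shift f (-A) x = - shift f A x"
  unfolding shift_def by auto

lemma shift_shift: "semigroup f \<Longrightarrow> shift f (shift f A x) y = shift f A (f x y)"
  unfolding shift_def by (simp add: semigroup.assoc)

lemma shift_return_set: "semigroup f \<Longrightarrow> shift f (return_set f q A) x = return_set f q (shift f A x)"
  unfolding return_set_def by (simp add: shift_shift) (simp add: shift_def)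

lemma return_set_Int:
  "ultrafilter q \<Longrightarrow> return_set f q (A \<inter> B) = return_set f q A \<inter> return_set f q B"
  unfolding return_set_def by (auto simp: shift_Int ultrafilter_Int_iff)

lemma return_set_Compl: "ultrafilter q \<Longrightarrow> return_set f q (-A) = - return_set f q A"
  unfolding return_set_def by (auto simp: shift_Compl ultrafilter_Compl)

lemma return_set_UNIV: "ultrafilter q \<Longrightarrow> return_set f q UNIV = UNIV"
  unfolding return_set_def shift_def by (simp add: ultrafilter_UNIV)

lemma return_set_mono:
  assumes q: "ultrafilter q" and AB: "A \<subseteq> B" shows "return_set f q A \<subseteq> return_set f q B"
proof
  fix x assume "x \<in> return_set f q A"
  then have "shift f A x \<in> q" unfolding return_set_def by simp
  moreover have "shift f A x \<subseteq> shift f B x" using AB unfolding shift_def by auto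
  ultimately have "shift f B x \<in> q" by (rule ultrafilter_mono[OF q])
  then show "x \<in> return_set f q B" unfolding return_set_def by simp
qed

lemma return_set_convol:
  "semigroup f \<Longrightarrow> return_set f (convol f q r) A = return_set f q (return_set f r A)"
  unfolding return_set_def[of f q] return_set_def[of f "convol f q r"]
  by (simp add: convol_iff shift_return_set)

lemma convol_assoc: "semigroup f \<Longrightarrow> convol f (convol f p q) r = convol f p (convol f q r)"
  by (auto simp: convol_iff return_set_convol)

lemma convol_ultrafilter:
  assumes p: "ultrafilter p" and q: "ultrafilter q" shows "ultrafilter (convol f p q)"
proof (rule ultrafilterI)
  fix A B assume "A \<in> convol f p q" "A \<subseteq> B"
  then show "B \<in> convol f p q"
    using return_set_mono[OF q] ultrafilter_mono[OF p] by (meson convol_iff)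
next
  fix A B assume "A \<in> convol f p q" "B \<in> convol f p q"
  then show "A \<inter> B \<in> convol f p q"
    using return_set_Int[OF q] ultrafilter_Int[OF p] by (simp add: convol_iff)
next
  have "return_set f q {} = {}" unfolding return_set_def shift_def using ultrafilter_empty[OF q] by simp
  then show "{} \<notin> convol f p q" using ultrafilter_empty[OF p] by (simp add: convol_iff)
next
  fix A show "A \<in> convol f p q \<or> -A \<in> convol f p q"
    using return_set_Compl[OF q] ultrafilter_Compl[OF p] by (simp add: convol_iff)
qed

definition ultra_closed :: "'a set set set \<Rightarrow> bool" where
  "ultra_closed M \<longleftrightarrow> (\<forall>u. ultrafilter u \<longrightarrow> \<Inter>M \<subseteq> u \<longrightarrow> u \<in> M)"

definition convol_closed :: "('a \<Rightarrow> 'a \<Rightarrow> 'a) \<Rightarrow> 'a set set set \<Rightarrow> bool" where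
  "convol_closed f M \<longleftrightarrow> (\<forall>p\<in>M. \<forall>q\<in>M. convol f p q \<in> M)"

lemma ultra_closedD: "ultra_closed M \<Longrightarrow> ultrafilter u \<Longrightarrow> \<Inter>M \<subseteq> u \<Longrightarrow> u \<in> M"
  unfolding ultra_closed_def by blast

lemma ultra_closed_Inter: "(\<And>M. M \<in> \<C> \<Longrightarrow> ultra_closed M) \<Longrightarrow> ultra_closed (\<Inter>\<C>)"
  unfolding ultra_closed_def by (meson Inter_anti_mono Inter_lower order_trans InterI)

lemma convol_closed_Inter: "(\<And>M. M \<in> \<C> \<Longrightarrow> convol_closed f M) \<Longrightarrow> convol_closed f (\<Inter>\<C>)"
  unfolding convol_closed_def by blast

text \<open>Compactness of the space of ultrafilters: a nonempty chain of nonempty closed sets of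
  ultrafilters has nonempty intersection.\<close>
lemma chain_Inter_nonempty:
  assumes \<D>: "\<D> \<noteq> {}" "subset.chain \<A> \<D>"
    and closed: "\<And>M. M \<in> \<D> \<Longrightarrow> M \<noteq> {} \<and> ultra_closed M \<and> (\<forall>q\<in>M. ultrafilter q)"
  shows "\<Inter>\<D> \<noteq> {}"
proof -
  let ?X = "\<Union>M\<in>\<D>. \<Inter>M"
  have "{} \<notin> ?X"
  proof
    assume "{} \<in> ?X"
    then obtain M where M: "M \<in> \<D>" "{} \<in> \<Inter>M" by blast
    then obtain q where "q \<in> M" "ultrafilter q" using closed by blast
    then show False using M(2) ultrafilter_empty by blast
  qed
  moreover have "A \<inter> B \<in> ?X" if AB: "A \<in> ?X" "B \<in> ?X" for A B
  proof -
    obtain M N where MN: "M \<in> \<D>" "N \<in> \<D>" "A \<in> \<Inter>M" "B \<in> \<Inter>N" using AB by blast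
    have "M \<subseteq> N \<or> N \<subseteq> M" using \<D>(2) MN(1,2) unfolding subset_chain_def by blast
    then obtain L where L: "L \<in> \<D>" "L \<subseteq> M" "L \<subseteq> N" using MN(1,2) by blast
    have "A \<inter> B \<in> q" if "q \<in> L" for q
      using closed[OF L(1)] MN(3,4) L(2,3) that ultrafilter_Int by blast
    then show ?thesis using L(1) by blast
  qed
  ultimately have "\<exists>u. ultrafilter u \<and> ?X \<subseteq> u" by (rule ultrafilter_extend)
  then obtain u where u: "ultrafilter u" "?X \<subseteq> u" by blast
  have "u \<in> M" if "M \<in> \<D>" for M
  proof -
    have "\<Inter>M \<subseteq> u" using u(2) that by blast
    then show ?thesis using closed[OF that] ultra_closedD u(1) by blast
  qed
  then show ?thesis using \<D>(1) by blast
qed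

text \<open>Zorn's lemma for minimal elements, obtained from the maximal version by complementation.\<close>
lemma subset_Zorn_min:
  assumes "\<A> \<noteq> {}" and chain: "\<And>\<C>. \<C> \<noteq> {} \<Longrightarrow> subset.chain \<A> \<C> \<Longrightarrow> \<Inter>\<C> \<in> \<A>"
  shows "\<exists>M\<in>\<A>. \<forall>X\<in>\<A>. X \<subseteq> M \<longrightarrow> X = M"
proof -
  have "\<exists>N\<in>uminus ` \<A>. \<forall>X\<in>uminus ` \<A>. N \<subseteq> X \<longrightarrow> X = N"
  proof (rule subset_Zorn_nonempty)
    fix \<C> assume \<C>: "\<C> \<noteq> {}" "subset.chain (uminus ` \<A>) \<C>"
    have "uminus ` \<C> \<subseteq> \<A>"
    proof
      fix X assume "X \<in> uminus ` \<C>"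
      then obtain Y where "Y \<in> \<C>" "X = -Y" by blast
      moreover obtain Z where "Z \<in> \<A>" "Y = -Z"
        using \<C>(2) \<open>Y \<in> \<C>\<close> unfolding subset_chain_def by blast
      ultimately show "X \<in> \<A>" by simp
    qed
    moreover have "X \<subseteq> Y \<or> Y \<subseteq> X" if XY: "X \<in> uminus ` \<C>" "Y \<in> uminus ` \<C>" for X Y
    proof -
      obtain x y where "x \<in> \<C>" "y \<in> \<C>" "X = -x" "Y = -y" using XY by blast
      then show ?thesis using \<C>(2) unfolding subset_chain_def by auto
    qed
    ultimately have "subset.chain \<A> (uminus ` \<C>)" unfolding subset_chain_def by blast
    moreover have "uminus ` \<C> \<noteq> {}" using \<C>(1) by blast
    ultimately have "\<Inter>(uminus ` \<C>) \<in> \<A>" by (rule chain[rotated])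
    moreover have "\<Union>\<C> = - \<Inter>(uminus ` \<C>)" by auto
    ultimately show "\<Union>\<C> \<in> uminus ` \<A>" by (rule image_eqI[rotated])
  qed (use assms in blast)
  then obtain M where M: "M \<in> \<A>" and max: "\<forall>X\<in>uminus ` \<A>. -M \<subseteq> X \<longrightarrow> X = -M"
    by blast
  have "X = M" if X: "X \<in> \<A>" "X \<subseteq> M" for X
  proof -
    have "-X \<in> uminus ` \<A>" "-M \<subseteq> -X" using X by auto
    then have "-X = -M" using max by blast
    then show ?thesis by simp
  qed
  then show ?thesis using M by blast
qed

lemma minimal_closed_subsemigroup:
  assumes H: "H \<noteq> {}" "\<forall>p\<in>H. ultrafilter p" "ultra_closed H" "convol_closed f H"
  obtains K where "K \<subseteq> H" "K \<noteq> {}" "ultra_closed K" "convol_closed f K"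
    "\<And>M. M \<subseteq> K \<Longrightarrow> M \<noteq> {} \<Longrightarrow> ultra_closed M \<Longrightarrow> convol_closed f M \<Longrightarrow> M = K"
proof -
  let ?\<A> = "{M. M \<subseteq> H \<and> M \<noteq> {} \<and> ultra_closed M \<and> convol_closed f M}"
  have "\<exists>K\<in>?\<A>. \<forall>M\<in>?\<A>. M \<subseteq> K \<longrightarrow> M = K"
  proof (rule subset_Zorn_min)
    fix \<C> assume \<C>: "\<C> \<noteq> {}" "subset.chain ?\<A> \<C>"
    then have members: "M \<subseteq> H \<and> M \<noteq> {} \<and> ultra_closed M \<and> convol_closed f M" if "M \<in> \<C>" for M
      using that unfolding subset_chain_def by blast
    have "\<Inter>\<C> \<noteq> {}"
      by (rule chain_Inter_nonempty[OF \<C>]) (use members H(2) in blast)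
    moreover have "\<Inter>\<C> \<subseteq> H" using \<C>(1) members by blast
    moreover have "ultra_closed (\<Inter>\<C>)" using members by (blast intro: ultra_closed_Inter)
    moreover have "convol_closed f (\<Inter>\<C>)" using members by (blast intro: convol_closed_Inter)
    ultimately show "\<Inter>\<C> \<in> ?\<A>" by blast
  qed (use H in blast)
  then obtain K where K: "K \<in> ?\<A>" and minimal: "\<forall>M\<in>?\<A>. M \<subseteq> K \<longrightarrow> M = K" by blast
  show ?thesis
  proof (rule that)
    fix M assume "M \<subseteq> K" "M \<noteq> {}" "ultra_closed M" "convol_closed f M"
    then show "M = K" using K minimal by blast
  qed (use K in auto)
qed

text \<open>Core of the continuity of right translation \<open>q \<mapsto> q \<cdot> p\<close>: an ultrafilter \<open>u\<close> in the closure of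
  the image of a closed set \<open>K\<close> is the image of some \<open>q \<in> K\<close>. The ultrafilter \<open>q\<close> is obtained by
  extending the intersections of common members of \<open>K\<close> with the sets \<open>{x. x\<^sup>-\<^sup>1A \<in> p}\<close>, \<open>A \<in> u\<close>.\<close>
lemma right_translate_preimage:
  assumes p: "ultrafilter p" and K: "\<forall>q\<in>K. ultrafilter q"
    and u: "ultrafilter u" "\<Inter>((\<lambda>q. convol f q p) ` K) \<subseteq> u"
  obtains q where "ultrafilter q" "\<Inter>K \<subseteq> q" "u \<subseteq> convol f q p"
proof -
  let ?X = "{Y \<inter> return_set f p A | Y A. Y \<in> \<Inter>K \<and> A \<in> u}"
  have "{} \<notin> ?X"
  proof
    assume "{} \<in> ?X"
    then obtain Y A where YA: "Y \<in> \<Inter>K" "A \<in> u" "Y \<inter> return_set f p A = {}" by blast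
    have "-A \<in> convol f q p" if q: "q \<in> K" for q
    proof -
      have "Y \<in> q" using YA(1) q by blast
      then have "return_set f p A \<notin> q"
        using YA(3) ultrafilter_Int[of q] ultrafilter_empty[of q] K q by metis
      then show ?thesis using K q by (simp add: convol_iff return_set_Compl[OF p] ultrafilter_Compl)
    qed
    then have "-A \<in> u" using u(2) by blast
    then show False using YA(2) ultrafilter_Compl[OF u(1)] by blast
  qed
  moreover have "B \<inter> C \<in> ?X" if BC: "B \<in> ?X" "C \<in> ?X" for B C
  proof -
    obtain Y1 A1 Y2 A2 where YA: "Y1 \<in> \<Inter>K" "A1 \<in> u" "B = Y1 \<inter> return_set f p A1"
      "Y2 \<in> \<Inter>K" "A2 \<in> u" "C = Y2 \<inter> return_set f p A2" using BC by blast
    then have "B \<inter> C = (Y1 \<inter> Y2) \<inter> return_set f p (A1 \<inter> A2)" by (auto simp: return_set_Int[OF p])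
    moreover have "Y1 \<inter> Y2 \<in> \<Inter>K" using YA K ultrafilter_Int by fast
    moreover have "A1 \<inter> A2 \<in> u" using YA ultrafilter_Int[OF u(1)] by blast
    ultimately show ?thesis by blast
  qed
  ultimately have "\<exists>q. ultrafilter q \<and> ?X \<subseteq> q" by (rule ultrafilter_extend)
  then obtain q where q: "ultrafilter q" "?X \<subseteq> q" by blast
  show ?thesis
  proof (rule that[OF q(1)])
    show "\<Inter>K \<subseteq> q"
    proof
      fix Y assume "Y \<in> \<Inter>K"
      then have "Y \<inter> return_set f p UNIV \<in> ?X" using ultrafilter_UNIV[OF u(1)] by blast
      then show "Y \<in> q" using q(2) return_set_UNIV[OF p] by auto
    qed
    show "u \<subseteq> convol f q p"
    proof
      fix A assume "A \<in> u"
      moreover have "UNIV \<in> \<Inter>K" using K ultrafilter_UNIV by blast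
      ultimately have "UNIV \<inter> return_set f p A \<in> q" using q(2) by blast
      then show "A \<in> convol f q p" by (simp add: convol_iff)
    qed
  qed
qed

text \<open>Right translation \<open>q \<mapsto> q \<cdot> p\<close> is continuous, so it maps closed (compact) sets of
  ultrafilters to closed sets.\<close>
lemma right_translate_closed:
  assumes p: "ultrafilter p" and K: "\<forall>q\<in>K. ultrafilter q" "ultra_closed K"
  shows "ultra_closed ((\<lambda>q. convol f q p) ` K)"
  unfolding ultra_closed_def
proof (intro allI impI)
  fix u assume u: "ultrafilter u" "\<Inter>((\<lambda>q. convol f q p) ` K) \<subseteq> u"
  then obtain q where q: "ultrafilter q" "\<Inter>K \<subseteq> q" "u \<subseteq> convol f q p"
    using right_translate_preimage[OF p K(1)] by blast
  have "q \<in> K" using ultra_closedD[OF K(2) q(1,2)] .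
  moreover have "u = convol f q p"
    using ultrafilter_subset_eq[OF u(1) convol_ultrafilter[OF q(1) p] q(3)] .
  ultimately show "u \<in> (\<lambda>q. convol f q p) ` K" by blast
qed

lemma stabilizer_closed:
  assumes p: "ultrafilter p" and K: "ultra_closed K"
  shows "ultra_closed {q \<in> K. convol f q p = p}"
  unfolding ultra_closed_def
proof (intro allI impI)
  let ?T = "{q \<in> K. convol f q p = p}"
  fix u assume u: "ultrafilter u" "\<Inter>?T \<subseteq> u"
  have "\<Inter>K \<subseteq> u" using u(2) by blast
  then have "u \<in> K" using ultra_closedD[OF K u(1)] by blast
  moreover have "p \<subseteq> convol f u p"
  proof
    fix A assume "A \<in> p"
    then have "return_set f p A \<in> \<Inter>?T" by (auto simp: convol_iff)
    then show "A \<in> convol f u p" using u(2) by (auto simp: convol_iff)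
  qed
  then have "p = convol f u p" by (rule ultrafilter_subset_eq[OF p convol_ultrafilter[OF u(1) p]])
  ultimately show "u \<in> ?T" by simp
qed

lemma ellis:
  assumes f: "semigroup f"
    and H: "H \<noteq> {}" "\<forall>p\<in>H. ultrafilter p" "ultra_closed H" "convol_closed f H"
  shows "\<exists>p\<in>H. convol f p p = p"
proof -
  obtain K where K: "K \<subseteq> H" "K \<noteq> {}" "ultra_closed K" "convol_closed f K"
    and minimal: "\<And>M. M \<subseteq> K \<Longrightarrow> M \<noteq> {} \<Longrightarrow> ultra_closed M \<Longrightarrow> convol_closed f M \<Longrightarrow> M = K"
    using minimal_closed_subsemigroup[OF H] by blast
  have Kult: "\<forall>q\<in>K. ultrafilter q" using K(1) H(2) by blast
  have Kmul: "convol f q r \<in> K" if "q \<in> K" "r \<in> K" for q r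
    using K(4) that unfolding convol_closed_def by blast
  obtain p where p: "p \<in> K" using K(2) by blast
  have pu: "ultrafilter p" using Kult p by blast
  have "(\<lambda>q. convol f q p) ` K = K"
  proof (rule minimal)
    show "(\<lambda>q. convol f q p) ` K \<subseteq> K" using Kmul p by blast
    show "(\<lambda>q. convol f q p) ` K \<noteq> {}" using p by blast
    show "ultra_closed ((\<lambda>q. convol f q p) ` K)" by (rule right_translate_closed[OF pu Kult K(3)])
    show "convol_closed f ((\<lambda>q. convol f q p) ` K)"
      unfolding convol_closed_def
    proof (intro ballI)
      fix a b assume "a \<in> (\<lambda>q. convol f q p) ` K" "b \<in> (\<lambda>q. convol f q p) ` K"
      then obtain q1 q2 where q: "q1 \<in> K" "q2 \<in> K" "a = convol f q1 p" "b = convol f q2 p" by blast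
      then have "convol f a b = convol f (convol f a q2) p" by (simp add: convol_assoc[OF f])
      moreover have "convol f a q2 \<in> K" using q Kmul p by simp
      ultimately show "convol f a b \<in> (\<lambda>q. convol f q p) ` K" by blast
    qed
  qed
  then obtain q0 where q0: "q0 \<in> K" "convol f q0 p = p" using p by (metis imageE)
  have "{q \<in> K. convol f q p = p} = K"
  proof (rule minimal)
    show "{q \<in> K. convol f q p = p} \<noteq> {}" using q0 by blast
    show "ultra_closed {q \<in> K. convol f q p = p}" by (rule stabilizer_closed[OF pu K(3)])
    show "convol_closed f {q \<in> K. convol f q p = p}"
      unfolding convol_closed_def
    proof (intro ballI)
      fix a b assume a: "a \<in> {q \<in> K. convol f q p = p}" and b: "b \<in> {q \<in> K. convol f q p = p}"
      then have "convol f (convol f a b) p = p" by (simp add: convol_assoc[OF f])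
      then show "convol f a b \<in> {q \<in> K. convol f q p = p}" using a b Kmul by blast
    qed
  qed blast
  then show ?thesis using p K(1) by blast
qed

definition star_closed :: "('a \<Rightarrow> 'a \<Rightarrow> 'a) \<Rightarrow> 'a set set \<Rightarrow> 'a set \<Rightarrow> bool" where
  "star_closed f p C \<longleftrightarrow> C \<in> p \<and> (\<forall>x\<in>C. shift f C x \<in> p)"

lemma star_closed_subset:
  assumes f: "semigroup f" and p: "ultrafilter p" "convol f p p = p" and A: "A \<in> p"
  shows "star_closed f p (A \<inter> return_set f p A)"
proof -
  have large: "return_set f p B \<in> p" if "B \<in> p" for B
    using that p(2) convol_iff[of B f p p] by simp
  have "shift f (A \<inter> return_set f p A) x \<in> p" if "x \<in> A \<inter> return_set f p A" for x
  proof -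
    have "shift f A x \<in> p" using that unfolding return_set_def by blast
    then show ?thesis
      using large ultrafilter_Int[OF p(1)] by (simp add: shift_Int shift_return_set[OF f])
  qed
  then show ?thesis using A large ultrafilter_Int[OF p(1)] unfolding star_closed_def by blast
qed

lemma star_closed_step:
  assumes f: "semigroup f" and p: "ultrafilter p" and C: "star_closed f p C" and x: "x \<in> C"
  shows "star_closed f p (C \<inter> shift f C x)"
proof -
  have shifts: "shift f C y \<in> p" if "y \<in> C" for y
    using C that unfolding star_closed_def by blast
  have "shift f (C \<inter> shift f C x) y \<in> p" if y: "y \<in> C \<inter> shift f C x" for y
  proof -
    have "f x y \<in> C" using y unfolding shift_def by blast
    then show ?thesis
      using shifts y ultrafilter_Int[OF p] by (simp add: shift_Int shift_shift[OF f])
  qed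
  moreover have "C \<inter> shift f C x \<in> p"
    using C x shifts ultrafilter_Int[OF p] unfolding star_closed_def by blast
  ultimately show ?thesis unfolding star_closed_def by blast
qed

definition avoiding :: "'a set set \<Rightarrow> 'a set \<Rightarrow> 'a set set" where
  "avoiding S K = {x \<in> S. x \<noteq> {} \<and> x \<inter> K = {}}"

lemma avoiding_Un: "avoiding S K \<inter> avoiding S L = avoiding S (K \<union> L)"
  unfolding avoiding_def by auto

text \<open>An IP set has members avoiding any finite set: only finitely many members of its infinite
  disjoint subfamily can meet \<open>K\<close>.\<close>
lemma avoiding_nonempty:
  assumes "IP_set S" "finite K" shows "avoiding S K \<noteq> {}"
proof -
  have "\<exists>F. F \<subseteq> S \<and> infinite F \<and> (\<forall>A\<in>F. \<forall>B\<in>F. A \<noteq> B \<longrightarrow> A \<inter> B = {})"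
    using assms(1) unfolding IP_set_def by (elim conjE)
  then obtain F where F: "F \<subseteq> S" "infinite F" "\<forall>A\<in>F. \<forall>B\<in>F. A \<noteq> B \<longrightarrow> A \<inter> B = {}"
    by blast
  have "disjoint_family_on id (F - {{}})"
    using F(3) unfolding disjoint_family_on_def by auto
  moreover have "infinite (F - {{}})" using F(2) by simp
  ultimately obtain x where "x \<in> F - {{}}" "disjnt K x"
    using disjoint_family_elem_disjnt[of "F - {{}}" K id] assms(2) by auto
  then have "x \<in> avoiding S K" using F(1) unfolding avoiding_def disjnt_def by blast
  then show ?thesis by blast
qed

text \<open>Every IP set carries an idempotent ultrafilter (for union) containing all its avoiding
  families: these ultrafilters form a nonempty closed subsemigroup.\<close>
lemma idempotent_avoiding:
  assumes S: "IP_set S"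
  shows "\<exists>p. ultrafilter p \<and> convol (\<union>) p p = p \<and> (\<forall>K. finite K \<longrightarrow> avoiding S K \<in> p)"
proof -
  have Sun: "A \<union> B \<in> S" if "A \<in> S" "B \<in> S" for A B
    using S that unfolding IP_set_def by blast
  let ?H = "{p. ultrafilter p \<and> (\<forall>K. finite K \<longrightarrow> avoiding S K \<in> p)}"
  have "\<exists>p\<in>?H. convol (\<union>) p p = p"
  proof (rule ellis[OF sup.semigroup_axioms])
    let ?X = "{avoiding S K | K. finite K}"
    have "{} \<notin> ?X" using avoiding_nonempty[OF S] by auto
    moreover have "A \<inter> B \<in> ?X" if AB: "A \<in> ?X" "B \<in> ?X" for A B
    proof -
      obtain K L where "finite K" "finite L" "A = avoiding S K" "B = avoiding S L" using AB by blast
      then have "finite (K \<union> L)" "A \<inter> B = avoiding S (K \<union> L)" by (simp_all add: avoiding_Un)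
      then show ?thesis by blast
    qed
    ultimately have "\<exists>u. ultrafilter u \<and> ?X \<subseteq> u" by (rule ultrafilter_extend)
    then obtain u where "ultrafilter u" "?X \<subseteq> u" by blast
    then have "u \<in> ?H" by blast
    then show "?H \<noteq> {}" by blast
    show "\<forall>p\<in>?H. ultrafilter p" by blast
    show "ultra_closed ?H"
      unfolding ultra_closed_def
    proof (intro allI impI)
      fix u assume u: "ultrafilter u" "\<Inter>?H \<subseteq> u"
      have "avoiding S K \<in> u" if "finite K" for K
        using u(2) that by blast
      then show "u \<in> ?H" using u(1) by blast
    qed
    show "convol_closed (\<union>) ?H"
      unfolding convol_closed_def
    proof (intro ballI)
      fix p q assume pq: "p \<in> ?H" "q \<in> ?H"
      have "avoiding S K \<in> convol (\<union>) p q" if K: "finite K" for K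
      proof -
        have p: "ultrafilter p" "avoiding S K \<in> p" and q: "ultrafilter q" "avoiding S K \<in> q"
          using pq K by auto
        have "avoiding S K \<subseteq> shift (\<union>) (avoiding S K) x" if "x \<in> avoiding S K" for x
          using that Sun unfolding avoiding_def shift_def by auto
        then have "avoiding S K \<subseteq> return_set (\<union>) q (avoiding S K)"
          using ultrafilter_mono[OF q(1) q(2)] unfolding return_set_def by blast
        then have "return_set (\<union>) q (avoiding S K) \<in> p" by (rule ultrafilter_mono[OF p])
        then show ?thesis by (simp add: convol_iff)
      qed
      moreover have "ultrafilter (convol (\<union>) p q)" using pq convol_ultrafilter by blast
      ultimately show "convol (\<union>) p q \<in> ?H" by blast
    qed
  qed
  then show ?thesis by blast
qed

definition FU :: "(nat \<Rightarrow> 'a set) \<Rightarrow> nat set \<Rightarrow> 'a set set" where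
  "FU xs J = {\<Union>(xs ` I) | I. finite I \<and> I \<noteq> {} \<and> I \<subseteq> J}"

lemma FU_iff: "X \<in> FU xs J \<longleftrightarrow> (\<exists>I. finite I \<and> I \<noteq> {} \<and> I \<subseteq> J \<and> X = \<Union>(xs ` I))"
  unfolding FU_def by blast

lemma FU_mono: "J \<subseteq> L \<Longrightarrow> FU xs J \<subseteq> FU xs L"
  unfolding FU_def by blast

lemma FU_singleton: "j \<in> J \<Longrightarrow> xs j \<in> FU xs J"
  unfolding FU_iff by (intro exI[of _ "{j}"]) simp

lemma FU_insert:
  assumes "X \<in> FU xs J" shows "xs j \<union> X \<in> FU xs (insert j J)"
proof -
  obtain I where I: "finite I" "I \<noteq> {}" "I \<subseteq> J" "X = \<Union>(xs ` I)"
    using assms unfolding FU_def by blast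
  then have "finite (insert j I) \<and> insert j I \<noteq> {} \<and> insert j I \<subseteq> insert j J
    \<and> xs j \<union> X = \<Union>(xs ` insert j I)" by auto
  then show ?thesis unfolding FU_def by blast
qed

lemma FU_disjoint:
  assumes "disjoint_family xs" "X \<in> FU xs J" "j \<notin> J" shows "xs j \<inter> X = {}"
proof -
  obtain I where I: "I \<subseteq> J" "X = \<Union>(xs ` I)" using assms(2) unfolding FU_iff by blast
  have "xs j \<inter> xs i = {}" if "i \<in> I" for i
  proof -
    have "i \<noteq> j" using that I(1) assms(3) by blast
    then show ?thesis using assms(1) unfolding disjoint_family_on_def by blast
  qed
  then show ?thesis unfolding I(2) by blast
qed

lemma FU_positive:
  assumes "disjoint_family xs" "X \<in> FU xs {0<..}"
  shows "X \<in> FU xs UNIV" "xs 0 \<union> X \<in> FU xs UNIV" "xs 0 \<inter> X = {}"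
proof -
  show "X \<in> FU xs UNIV" using assms(2) FU_mono[of "{0<..}" UNIV xs] by blast
  show "xs 0 \<union> X \<in> FU xs UNIV"
    using FU_insert[OF assms(2), of 0] FU_mono[of "insert 0 {0<..}" UNIV xs] by blast
  show "xs 0 \<inter> X = {}" using FU_disjoint[OF assms, of 0] by simp
qed

lemma shift_chain_FU:
  assumes xs: "\<And>n. xs n \<in> C n" and C: "\<And>n. C (Suc n) \<subseteq> C n \<inter> shift (\<union>) (C n) (xs n)"
    and I: "finite I" "I \<noteq> {}"
  shows "\<Union>(xs ` I) \<in> C (Min I)"
proof -
  have dec: "C n \<subseteq> C m" if "m \<le> n" for m n
    using C lift_Suc_antimono_le[of C, OF _ that] by blast
  have "I \<noteq> {} \<longrightarrow> \<Union>(xs ` I) \<in> C (Min I)"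
    using I(1)
  proof (induction I rule: finite_remove_induct)
    case (remove I)
    let ?m = "Min I" and ?I' = "I - {Min I}"
    show ?case
    proof (cases "?I' = {}")
      case True
      then have "I = {?m}" using remove.hyps Min_in by blast
      then show ?thesis using xs by (metis ccpo_Sup_singleton image_empty image_insert Min_singleton)
    next
      case False
      have "?m \<in> I" using remove.hyps Min_in by blast
      then have "\<Union>(xs ` ?I') \<in> C (Min ?I')" using remove.IH False by blast
      moreover have "Suc ?m \<le> Min ?I'"
        using remove.hyps False by (metis Diff_iff Min_in Min_le Suc_leI finite_Diff insertCI le_neq_implies_less)
      ultimately have "\<Union>(xs ` ?I') \<in> shift (\<union>) (C ?m) (xs ?m)" using dec C by blast
      moreover have "\<Union>(xs ` I) = xs ?m \<union> \<Union>(xs ` ?I')" using \<open>?m \<in> I\<close> by blast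
      ultimately show ?thesis unfolding shift_def by simp
    qed
  qed simp
  then show ?thesis using I(2) by blast
qed

lemma accumulated_disjoint:
  assumes K: "\<And>n. K (Suc n) = K n \<union> xs n" and avoid: "\<And>n. xs n \<inter> K n = {}"
  shows "disjoint_family xs"
proof -
  have below: "xs m \<subseteq> K n" if "m < n" for m n
    using that
  proof (induction n)
    case (Suc n) then show ?case using K by (auto simp: less_Suc_eq)
  qed simp
  show ?thesis
    unfolding disjoint_family_on_def
  proof (intro ballI impI)
    fix m n :: nat assume "m \<noteq> n"
    then consider "m < n" | "n < m" by linarith
    then show "xs m \<inter> xs n = {}" using below avoid by cases blast+
  qed
qed

text \<open>Galvin--Glazer construction by dependent choice: inside a member \<open>A\<close> of an idempotent
  ultrafilter containing all avoiding families, choose star-closed sets \<open>C n \<subseteq> A\<close>, points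
  \<open>xs n \<in> C n\<close> avoiding the union \<open>K n\<close> of the earlier points, and refine \<open>C (Suc n)\<close> to
  \<open>C n\<close> intersected with its shift by \<open>xs n\<close>.\<close>
lemma star_closed_sequence:
  assumes p: "ultrafilter p" "convol (\<union>) p p = p"
    and avoid: "\<And>K. finite K \<Longrightarrow> avoiding S K \<in> p"
    and fin: "\<And>x. x \<in> S \<Longrightarrow> finite x" and A: "A \<in> p"
  shows "\<exists>C xs K. \<forall>n. C n \<subseteq> A \<and> xs n \<in> C n \<inter> avoiding S (K n)
    \<and> C (Suc n) = C n \<inter> shift (\<union>) (C n) (xs n) \<and> K (Suc n) = K n \<union> xs n"
proof -
  have pick: "\<exists>x. x \<in> C \<inter> avoiding S K" if "star_closed (\<union>) p C" "finite K" for C K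
  proof -
    have "C \<inter> avoiding S K \<in> p"
      using that avoid ultrafilter_Int[OF p(1)] unfolding star_closed_def by blast
    then show ?thesis using ultrafilter_empty[OF p(1)] by (metis all_not_in_conv)
  qed
  define P where "P n s \<longleftrightarrow> (case s of (C, K, x) \<Rightarrow>
    star_closed (\<union>) p C \<and> C \<subseteq> A \<and> finite K \<and> x \<in> C \<inter> avoiding S K)"
    for n :: nat and s :: "'a set set \<times> 'a set \<times> 'a set"
  define Q where "Q n s s' \<longleftrightarrow> (case (s, s') of ((C, K, x), (C', K', x')) \<Rightarrow>
    C' = C \<inter> shift (\<union>) C x \<and> K' = K \<union> x)"
    for n :: nat and s s' :: "'a set set \<times> 'a set \<times> 'a set"
  have "\<exists>s. P 0 s"
  proof -
    let ?C = "A \<inter> return_set (\<union>) p A"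
    have C: "star_closed (\<union>) p ?C" by (rule star_closed_subset[OF sup.semigroup_axioms p A])
    then obtain x where "x \<in> ?C \<inter> avoiding S {}" using pick by blast
    then have "P 0 (?C, {}, x)" using C unfolding P_def by auto
    then show ?thesis by blast
  qed
  moreover have "\<exists>s'. P (Suc n) s' \<and> Q n s s'" if "P n s" for n s
  proof -
    obtain C K x where s: "s = (C, K, x)" by (cases s)
    then have C: "star_closed (\<union>) p C" "C \<subseteq> A" "finite K" "x \<in> C \<inter> avoiding S K"
      using that unfolding P_def by auto
    let ?C' = "C \<inter> shift (\<union>) C x" and ?K' = "K \<union> x"
    have C': "star_closed (\<union>) p ?C'"
      using star_closed_step[OF sup.semigroup_axioms p(1) C(1)] C(4) by blast
    moreover have "finite ?K'" using C(3,4) fin unfolding avoiding_def by blast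
    ultimately obtain x' where "x' \<in> ?C' \<inter> avoiding S ?K'" using pick by blast
    then have "P (Suc n) (?C', ?K', x') \<and> Q n s (?C', ?K', x')"
      using C' C \<open>finite ?K'\<close> unfolding P_def Q_def s by auto
    then show ?thesis by blast
  qed
  ultimately obtain g where g: "\<And>n. P n (g n) \<and> Q n (g n) (g (Suc n))"
    using dependent_nat_choice[of P Q] by blast
  define C where "C n = fst (g n)" for n
  define K where "K n = fst (snd (g n))" for n
  define xs where "xs n = snd (snd (g n))" for n
  have g_eq: "g n = (C n, K n, xs n)" for n unfolding C_def K_def xs_def by simp
  have state: "C n \<subseteq> A" "xs n \<in> C n \<inter> avoiding S (K n)" for n
    using g[of n] unfolding g_eq P_def by auto
  have step: "C (Suc n) = C n \<inter> shift (\<union>) (C n) (xs n)" "K (Suc n) = K n \<union> xs n" for n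
    using g[of n] unfolding g_eq Q_def by auto
  show ?thesis by (intro exI[of _ C] exI[of _ xs] exI[of _ K]) (use state step in simp)
qed

lemma idempotent_FU_sequence:
  assumes p: "ultrafilter p" "convol (\<union>) p p = p"
    and avoid: "\<And>K. finite K \<Longrightarrow> avoiding S K \<in> p"
    and fin: "\<And>x. x \<in> S \<Longrightarrow> finite x" and A: "A \<in> p"
  shows "\<exists>xs. (\<forall>n. xs n \<in> S \<and> xs n \<noteq> {}) \<and> disjoint_family xs \<and> FU xs UNIV \<subseteq> A"
proof -
  have "\<exists>C xs K. \<forall>n. C n \<subseteq> A \<and> xs n \<in> C n \<inter> avoiding S (K n)
      \<and> C (Suc n) = C n \<inter> shift (\<union>) (C n) (xs n) \<and> K (Suc n) = K n \<union> xs n"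
    by (rule star_closed_sequence[OF p _ _ A]) (fact avoid, fact fin)
  then obtain C xs K where seq: "\<forall>n. C n \<subseteq> A \<and> xs n \<in> C n \<inter> avoiding S (K n)
      \<and> C (Suc n) = C n \<inter> shift (\<union>) (C n) (xs n) \<and> K (Suc n) = K n \<union> xs n"
    by blast
  have C: "C n \<subseteq> A" and xs: "xs n \<in> C n \<inter> avoiding S (K n)"
    and step: "C (Suc n) = C n \<inter> shift (\<union>) (C n) (xs n)" "K (Suc n) = K n \<union> xs n" for n
    using seq by blast+
  have "\<forall>n. xs n \<in> S \<and> xs n \<noteq> {}" using xs unfolding avoiding_def by blast
  moreover have "disjoint_family xs"
    by (rule accumulated_disjoint[of K]) (use step(2) xs in \<open>auto simp: avoiding_def\<close>)
  moreover have "FU xs UNIV \<subseteq> A"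
  proof
    fix X assume "X \<in> FU xs UNIV"
    then obtain I where I: "finite I" "I \<noteq> {}" "X = \<Union>(xs ` I)" unfolding FU_iff by blast
    have "X \<in> C (Min I)"
      unfolding I(3) by (rule shift_chain_FU[OF _ _ I(1,2)]) (use xs step(1) in auto)
    then show "X \<in> A" using C by blast
  qed
  ultimately show ?thesis by blast
qed

lemma IP_set_FU:
  assumes xs: "\<And>n. finite (xs n)" "\<And>n. xs n \<noteq> {}" "disjoint_family xs" and J: "infinite J"
  shows "IP_set (FU xs J)"
  unfolding IP_set_def
proof (intro conjI ballI)
  fix X assume "X \<in> FU xs J"
  then obtain I where "finite I" "X = \<Union>(xs ` I)" unfolding FU_iff by blast
  then show "finite X" using xs(1) by simp
next
  fix X Y assume "X \<in> FU xs J" "Y \<in> FU xs J"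
  then obtain I L where I: "finite I" "I \<noteq> {}" "I \<subseteq> J" "X = \<Union>(xs ` I)"
    and L: "finite L" "L \<noteq> {}" "L \<subseteq> J" "Y = \<Union>(xs ` L)" unfolding FU_iff by blast
  have "X \<union> Y = \<Union>(xs ` (I \<union> L))" using I(4) L(4) by (simp add: image_Un)
  moreover have "finite (I \<union> L)" "I \<union> L \<noteq> {}" "I \<union> L \<subseteq> J" using I L by simp_all
  ultimately show "X \<union> Y \<in> FU xs J" unfolding FU_iff by blast
next
  have "inj_on xs J"
  proof (rule inj_onI)
    fix m n assume "xs m = xs n"
    then show "m = n" using xs(2)[of m] xs(3) unfolding disjoint_family_on_def by fastforce
  qed
  then have "infinite (xs ` J)" using J by (simp add: finite_image_iff)
  moreover have "xs ` J \<subseteq> FU xs J"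
  proof
    fix X assume "X \<in> xs ` J"
    then obtain j where "j \<in> J" "X = \<Union>(xs ` {j})" by auto
    then show "X \<in> FU xs J" unfolding FU_iff by blast
  qed
  moreover have "\<forall>X\<in>xs ` J. \<forall>Y\<in>xs ` J. X \<noteq> Y \<longrightarrow> X \<inter> Y = {}"
  proof (intro ballI impI)
    fix X Y assume "X \<in> xs ` J" "Y \<in> xs ` J" "X \<noteq> Y"
    then obtain m n where "X = xs m" "Y = xs n" "m \<noteq> n" by blast
    then show "X \<inter> Y = {}" using xs(3) unfolding disjoint_family_on_def by blast
  qed
  ultimately show "\<exists>F. F \<subseteq> FU xs J \<and> infinite F \<and> (\<forall>A\<in>F. \<forall>B\<in>F. A \<noteq> B \<longrightarrow> A \<inter> B = {})"
    by (intro exI[of _ "xs ` J"] conjI)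
qed

lemma IP_set_Hindman:
  assumes S: "IP_set S" and colours: "finite (c ` S)"
  shows "\<exists>xs i. (\<forall>n. xs n \<in> S \<and> xs n \<noteq> {}) \<and> disjoint_family xs
           \<and> (\<forall>X\<in>FU xs UNIV. X \<in> S \<and> c X = i)"
proof -
  obtain p where p: "ultrafilter p" "convol (\<union>) p p = p"
    and avoid: "\<And>K. finite K \<Longrightarrow> avoiding S K \<in> p"
    using idempotent_avoiding[OF S] by blast
  have "avoiding S {} \<subseteq> S" unfolding avoiding_def by blast
  then have "S \<in> p" using avoid[of "{}"] ultrafilter_mono[OF p(1)] by blast
  moreover have "S = (\<Union>i\<in>c ` S. S \<inter> c -` {i})" by blast
  ultimately obtain i where "S \<inter> c -` {i} \<in> p"
    using ultrafilter_finite_UN[OF p(1) colours] by metis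
  moreover have "\<And>x. x \<in> S \<Longrightarrow> finite x" using S unfolding IP_set_def by blast
  ultimately obtain xs where "\<forall>n. xs n \<in> S \<and> xs n \<noteq> {}" "disjoint_family xs"
    "FU xs UNIV \<subseteq> S \<inter> c -` {i}"
    using idempotent_FU_sequence[OF p avoid] by blast
  then show ?thesis by blast
qed

theorem lemma2p3:
  fixes S :: "nat set set" and r :: nat and c :: "nat set \<Rightarrow> nat"
  assumes "IP_set S" and "r \<ge> 1"
    and "\<forall>A\<in>S. c A \<in> {1..r}"
  shows "(\<exists>S'. S' \<subseteq> S \<and> IP_set S' \<and> (\<exists>i\<in>{1..r}. \<forall>A\<in>S'. c A \<noteq> i))
       \<or> (\<exists>\<B> \<T>. finite \<B> \<and> \<B> \<subseteq> S \<and> IP_set \<T> \<and> \<T> \<subseteq> set_minus_fam S \<B>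
              \<and> full_matches c \<B> \<T>)"
proof -
  have "c ` S \<subseteq> {1..r}" using assms(3) by blast
  then have "finite (c ` S)" by (rule finite_subset) simp
  then obtain xs i where xs: "\<forall>n. xs n \<in> S \<and> xs n \<noteq> {}" "disjoint_family xs"
    and mono: "\<forall>X\<in>FU xs UNIV. X \<in> S \<and> c X = i"
    using IP_set_Hindman[OF assms(1)] by blast
  have "\<forall>A\<in>S. finite A" using assms(1) unfolding IP_set_def by (elim conjE)
  then have fin: "finite (xs n)" for n using xs(1) by blast
  define \<T> where "\<T> = FU xs {0<..}"
  have in_FU: "X \<in> FU xs UNIV" "xs 0 \<union> X \<in> FU xs UNIV" "xs 0 \<inter> X = {}" if "X \<in> \<T>" for X
    using FU_positive[OF xs(2)] that unfolding \<T>_def by blast+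
  have "IP_set \<T>"
    unfolding \<T>_def by (rule IP_set_FU[OF fin _ xs(2) infinite_Ioi]) (use xs(1) in blast)
  moreover have "\<T> \<subseteq> set_minus_fam S {xs 0}"
    using in_FU mono unfolding set_minus_fam_def by blast
  moreover have "full_matches c {xs 0} \<T>"
    unfolding full_matches_def full_matches_set_def
  proof
    fix X assume "X \<in> \<T>"
    moreover have "xs 0 \<in> FU xs UNIV" by (rule FU_singleton) simp
    ultimately show "\<exists>D\<in>{xs 0}. c D = c X \<and> c X = c (D \<union> X)" using in_FU mono by simp
  qed
  moreover have "finite {xs 0}" "{xs 0} \<subseteq> S" using xs(1) by auto
  ultimately show ?thesis by blast
qed

end
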